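(* Let $d\ge1$, $K_d=\{x\in\mathbf{R}^d:x_i\ge0\ (i=1,\dots,d),\ \sum_{i=1}^dx_i\le1\}$, $a\ge0$, and $(\mu_n)_{n\ge1}$ Borel probability measures on $K_d$. For $n\ge1$, $f\in\mathscr{C}(K_d)$ and $x\in K_d$ let $$C_n(f)(x)=\sum_{h\in\{0,\dots,n\}^d,\ |h|\le n}\frac{n!}{h_1!\cdots h_d!(n-|h|)!}x_1^{h_1}\cdots x_d^{h_d}\Big(1-\sum_{i=1}^dx_i\Big)^{n-|h|}\int_{K_d}f\Big(\frac{h+as}{n+a}\Big)\,d\mu_n(s).$$ Then each $C_n$ maps continuous axially convex functions on $K_d$ into (continuous) axially convex functions.
   Context: $|h|=h_1+\dots+h_d$. A function $f\in\mathscr{C}(K_d)$ is axially convex if it is convex on each segment in $K_d$ parallel to a segment joining two vertices (extreme points) of $K_d$. *)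

theory Defs
  imports "HOL-Probability.Probability"
begin

definition std_simplex :: "(real ^ 'n::finite) set" where
  "std_simplex = {x. (\<forall>i. 0 \<le> x $ i) \<and> (\<Sum>i\<in>UNIV. x $ i) \<le> 1}"

definition simplex_vertices :: "(real ^ 'n::finite) set" where
  "simplex_vertices = insert 0 (range (\<lambda>i. axis i 1))"

definition axially_convex :: "(real ^ 'n::finite \<Rightarrow> real) \<Rightarrow> bool" where
  "axially_convex f \<longleftrightarrow>
     (\<forall>x\<in>std_simplex. \<forall>y\<in>std_simplex.
        (\<exists>u\<in>simplex_vertices. \<exists>w\<in>simplex_vertices. \<exists>c::real. y - x = c *\<^sub>R (u - w))
        \<longrightarrow> convex_on (closed_segment x y) f)"

definition multi_indices :: "nat \<Rightarrow> ('n::finite \<Rightarrow> nat) set" where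
  "multi_indices n = {h. (\<forall>i. h i \<le> n) \<and> (\<Sum>i\<in>UNIV. h i) \<le> n}"

definition C_op :: "real \<Rightarrow> (real ^ 'n) measure \<Rightarrow> nat \<Rightarrow> (real ^ 'n::finite \<Rightarrow> real)
                     \<Rightarrow> real ^ 'n \<Rightarrow> real" where
  "C_op a \<mu> n f x =
     (\<Sum>h\<in>multi_indices n.
        fact n / ((\<Prod>i\<in>UNIV. fact (h i)) * fact (n - (\<Sum>i\<in>UNIV. h i)))
        * (\<Prod>i\<in>UNIV. (x $ i) ^ (h i))
        * (1 - (\<Sum>i\<in>UNIV. x $ i)) ^ (n - (\<Sum>i\<in>UNIV. h i))
        * (\<integral>s. f ((1 / (real n + a)) *\<^sub>R ((\<chi> i. real (h i)) + a *\<^sub>R s)) \<partial>\<mu>))"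

end

theory Submission
  imports Defs "HOL-Library.Function_Algebras"
begin

text \<open>
  With F h = \<integral>f((h + a s)/(n + a)) d\<mu>(s), the operator C_n f is the Bernstein polynomial of
  degree n on the simplex with coefficients F, hence continuous. Differentiating a Bernstein
  polynomial along a direction v gives n times the Bernstein polynomial of degree n - 1 whose
  coefficients are the forward differences of F along v; differentiating twice, C_n f is convex on a
  segment of direction v as soon as the second forward differences of F along v are nonnegative.
  For v = u - w with vertices u, w these are F(k+2p) + F(k+2q) - 2F(k+p+q), where p, q are the
  multi-indices of u and w, and for every s the three arguments of f are the ends and the midpoint
  of a segment parallel to u - w; so they are nonnegative by axial convexity of f, integrated
  against \<mu>.
\<close>

definition multi_size :: "('n::finite \<Rightarrow> nat) \<Rightarrow> nat" where
  "multi_size h = (\<Sum>i\<in>UNIV. h i)"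

definition unit_index :: "'n \<Rightarrow> 'n \<Rightarrow> nat" where
  "unit_index i = (\<lambda>j. if j = i then 1 else 0)"

lemma unit_index_apply [simp]: "unit_index i j = (if j = i then 1 else 0)"
  by (simp add: unit_index_def)

definition index_vec :: "('n::finite \<Rightarrow> nat) \<Rightarrow> real ^ 'n" where
  "index_vec h = (\<chi> i. real (h i))"

definition multinomial_coeff :: "nat \<Rightarrow> ('n::finite \<Rightarrow> nat) \<Rightarrow> real" where
  "multinomial_coeff n h = fact n / ((\<Prod>i\<in>UNIV. fact (h i)) * fact (n - multi_size h))"

definition monomial_vec :: "('n::finite \<Rightarrow> nat) \<Rightarrow> real ^ 'n \<Rightarrow> real" where
  "monomial_vec h x = (\<Prod>i\<in>UNIV. (x $ i) ^ h i)"

definition slack :: "real ^ 'n::finite \<Rightarrow> real" where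
  "slack x = 1 - (\<Sum>i\<in>UNIV. x $ i)"

definition bernstein_basis :: "nat \<Rightarrow> ('n::finite \<Rightarrow> nat) \<Rightarrow> real ^ 'n \<Rightarrow> real" where
  "bernstein_basis n h x = multinomial_coeff n h * monomial_vec h x * slack x ^ (n - multi_size h)"

definition bernstein :: "nat \<Rightarrow> (('n::finite \<Rightarrow> nat) \<Rightarrow> real) \<Rightarrow> real ^ 'n \<Rightarrow> real" where
  "bernstein n F x = (\<Sum>h\<in>multi_indices n. bernstein_basis n h x * F h)"

definition fwd_diff :: "real ^ 'n::finite \<Rightarrow> (('n \<Rightarrow> nat) \<Rightarrow> real) \<Rightarrow> ('n \<Rightarrow> nat) \<Rightarrow> real" where
  "fwd_diff v F k = (\<Sum>i\<in>UNIV. v $ i * (F (k + unit_index i) - F k))"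

lemma mem_multi_indices_iff: "h \<in> multi_indices n \<longleftrightarrow> multi_size h \<le> n"
proof -
  have "h i \<le> multi_size h" for i
    unfolding multi_size_def by (rule member_le_sum) auto
  then show ?thesis
    unfolding multi_indices_def multi_size_def by (auto intro: le_trans)
qed

lemma finite_multi_indices: "finite (multi_indices n :: ('n::finite \<Rightarrow> nat) set)"
proof (rule finite_subset)
  show "multi_indices n \<subseteq> PiE UNIV (\<lambda>_::'n. {..n})"
    unfolding multi_indices_def by (auto simp: PiE_def extensional_def)
qed (intro finite_PiE; simp)

lemma multi_indices_0: "multi_indices 0 = {0 :: 'n::finite \<Rightarrow> nat}"
  by (auto simp: mem_multi_indices_iff multi_size_def fun_eq_iff)

lemma multi_size_add: "multi_size (h + k) = multi_size h + multi_size k"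
  by (simp add: multi_size_def sum.distrib)

lemma multi_size_unit_index: "multi_size (unit_index i :: 'n::finite \<Rightarrow> nat) = 1"
  by (simp add: multi_size_def)

lemma prod_fact_add_unit_index:
  fixes k :: "'n::finite \<Rightarrow> nat"
  shows "(\<Prod>j\<in>UNIV. fact ((k + unit_index i) j) :: real) = real (Suc (k i)) * (\<Prod>j\<in>UNIV. fact (k j))"
proof -
  have "(\<Prod>j\<in>UNIV. fact ((k + unit_index i) j) :: real)
      = fact (Suc (k i)) * (\<Prod>j\<in>UNIV - {i}. fact (k j))"
    by (subst prod.remove[of UNIV i]) (auto intro!: prod.cong)
  also have "\<dots> = real (Suc (k i)) * (fact (k i) * (\<Prod>j\<in>UNIV - {i}. fact (k j)))"
    by simp
  finally show ?thesis
    by (simp add: prod.remove[of UNIV i])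
qed

lemma multinomial_coeff_Suc_add_unit_index:
  assumes "multi_size k \<le> m"
  shows "multinomial_coeff (Suc m) (k + unit_index i) * real (Suc (k i)) = real (Suc m) * multinomial_coeff m k"
  using assms unfolding multinomial_coeff_def prod_fact_add_unit_index
  by (simp add: multi_size_add multi_size_unit_index)

lemma multinomial_coeff_Suc:
  assumes "multi_size h \<le> m"
  shows "multinomial_coeff (Suc m) h * real (Suc m - multi_size h) = real (Suc m) * multinomial_coeff m h"
  using assms by (simp add: multinomial_coeff_def Suc_diff_le)

lemma monomial_vec_has_real_derivative_line:
  fixes x v :: "real ^ 'n::finite"
  shows "((\<lambda>t. monomial_vec h (x + t *\<^sub>R v)) has_real_derivative
     (\<Sum>j\<in>UNIV. v $ j * real (h j) * monomial_vec (h(j := h j - 1)) (x + t *\<^sub>R v))) (at t)"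
proof -
  let ?y = "\<lambda>i. x $ i + t * v $ i"
  have "((\<lambda>t. (x $ i + t * v $ i) ^ h i) has_real_derivative
      real (h i) * ?y i ^ (h i - 1) * v $ i) (at t)" for i
    by (auto intro!: derivative_eq_intros)
  from has_field_derivative_prod[of UNIV "\<lambda>i t. (x $ i + t * v $ i) ^ h i", OF this]
  have "((\<lambda>t. \<Prod>i\<in>UNIV. (x $ i + t * v $ i) ^ h i) has_real_derivative
      (\<Sum>j\<in>UNIV. (real (h j) * ?y j ^ (h j - 1) * v $ j) * (\<Prod>i\<in>UNIV - {j}. ?y i ^ h i))) (at t)" .
  moreover have "?y j ^ (h j - 1) * (\<Prod>i\<in>UNIV - {j}. ?y i ^ h i)
      = monomial_vec (h(j := h j - 1)) (x + t *\<^sub>R v)" for j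
    unfolding monomial_vec_def by (subst prod.remove[of UNIV j]) (auto intro!: prod.cong)
  ultimately show ?thesis
    by (simp add: monomial_vec_def mult_ac)
qed

lemma slack_has_real_derivative_line:
  fixes x v :: "real ^ 'n::finite"
  shows "((\<lambda>t. slack (x + t *\<^sub>R v)) has_real_derivative - (\<Sum>i\<in>UNIV. v $ i)) (at t)"
  unfolding slack_def by (auto intro!: derivative_eq_intros simp: sum_negf[symmetric])

lemma sum_bernstein_basis_decr:
  fixes F :: "('n::finite \<Rightarrow> nat) \<Rightarrow> real" and y :: "real ^ 'n"
  shows "(\<Sum>h\<in>multi_indices (Suc m). multinomial_coeff (Suc m) h * real (h j)
            * monomial_vec (h(j := h j - 1)) y * slack y ^ (Suc m - multi_size h) * F h)
       = real (Suc m) * (\<Sum>k\<in>multi_indices m. bernstein_basis m k y * F (k + unit_index j))"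
proof -
  let ?T = "{h\<in>multi_indices (Suc m). 0 < h j}"
  have "(\<Sum>h\<in>multi_indices (Suc m). multinomial_coeff (Suc m) h * real (h j)
            * monomial_vec (h(j := h j - 1)) y * slack y ^ (Suc m - multi_size h) * F h)
      = (\<Sum>h\<in>?T. multinomial_coeff (Suc m) h * real (h j)
            * monomial_vec (h(j := h j - 1)) y * slack y ^ (Suc m - multi_size h) * F h)"
    by (rule sum.mono_neutral_right) (auto simp: finite_multi_indices)
  also have "\<dots> = (\<Sum>k\<in>multi_indices m. real (Suc m) * (bernstein_basis m k y * F (k + unit_index j)))"
  proof (rule sym, rule sum.reindex_bij_witness[where i = "\<lambda>h. h(j := h j - 1)" and j = "\<lambda>k. k + unit_index j"])
    fix h :: "'n \<Rightarrow> nat" assume h: "h \<in> ?T"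
    then show "h(j := h j - 1) + unit_index j = h"
      by (auto simp: fun_eq_iff)
    then have "multi_size h = Suc (multi_size (h(j := h j - 1)))"
      by (metis Suc_eq_plus1 multi_size_add multi_size_unit_index)
    with h show "h(j := h j - 1) \<in> multi_indices m"
      by (simp add: mem_multi_indices_iff)
  next
    fix k :: "'n \<Rightarrow> nat" assume k: "k \<in> multi_indices m"
    have k_j: "(k + unit_index j) j = Suc (k j)" "(k + unit_index j)(j := k j) = k"
      by (auto simp: fun_eq_iff)
    then show "(k + unit_index j)(j := (k + unit_index j) j - 1) = k" by simp
    have size: "multi_size (k + unit_index j) = Suc (multi_size k)"
      by (simp add: multi_size_add multi_size_unit_index)
    with k show "k + unit_index j \<in> ?T"
      by (simp add: mem_multi_indices_iff)
    show "multinomial_coeff (Suc m) (k + unit_index j) * real ((k + unit_index j) j)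
            * monomial_vec ((k + unit_index j)(j := (k + unit_index j) j - 1)) y
            * slack y ^ (Suc m - multi_size (k + unit_index j)) * F (k + unit_index j)
          = real (Suc m) * (bernstein_basis m k y * F (k + unit_index j))"
      using multinomial_coeff_Suc_add_unit_index[of k m j] k
      by (simp add: k_j size bernstein_basis_def mem_multi_indices_iff mult_ac)
  qed
  finally show ?thesis
    by (simp add: sum_distrib_left)
qed

lemma sum_bernstein_basis_slack:
  fixes F :: "('n::finite \<Rightarrow> nat) \<Rightarrow> real" and y :: "real ^ 'n"
  shows "(\<Sum>h\<in>multi_indices (Suc m). multinomial_coeff (Suc m) h * real (Suc m - multi_size h)
            * monomial_vec h y * slack y ^ (Suc m - multi_size h - 1) * F h)
       = real (Suc m) * bernstein m F y"
proof -
  have "(\<Sum>h\<in>multi_indices (Suc m). multinomial_coeff (Suc m) h * real (Suc m - multi_size h)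
            * monomial_vec h y * slack y ^ (Suc m - multi_size h - 1) * F h)
      = (\<Sum>h\<in>multi_indices m. multinomial_coeff (Suc m) h * real (Suc m - multi_size h)
            * monomial_vec h y * slack y ^ (Suc m - multi_size h - 1) * F h)"
    by (rule sum.mono_neutral_right) (auto simp: finite_multi_indices mem_multi_indices_iff)
  also have "\<dots> = (\<Sum>h\<in>multi_indices m. real (Suc m) * (bernstein_basis m h y * F h))"
  proof (rule sum.cong)
    fix h :: "'n \<Rightarrow> nat" assume "h \<in> multi_indices m"
    then have "multi_size h \<le> m"
      by (simp add: mem_multi_indices_iff)
    then show "multinomial_coeff (Suc m) h * real (Suc m - multi_size h)
            * monomial_vec h y * slack y ^ (Suc m - multi_size h - 1) * F h
          = real (Suc m) * (bernstein_basis m h y * F h)"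
      using multinomial_coeff_Suc[of h m] by (simp add: bernstein_basis_def mult_ac)
  qed simp
  finally show ?thesis
    by (simp add: bernstein_def sum_distrib_left)
qed

lemma bernstein_0: "bernstein 0 F x = F 0"
  by (simp add: bernstein_def bernstein_basis_def multinomial_coeff_def monomial_vec_def
      multi_size_def multi_indices_0)

lemma bernstein_fwd_diff:
  "bernstein m (fwd_diff v F) y
     = (\<Sum>j\<in>UNIV. v $ j * (\<Sum>k\<in>multi_indices m. bernstein_basis m k y * F (k + unit_index j)))
       - (\<Sum>i\<in>UNIV. v $ i) * bernstein m F y"
proof -
  have "bernstein m (fwd_diff v F) y
      = (\<Sum>k\<in>multi_indices m. (\<Sum>j\<in>UNIV. v $ j * (bernstein_basis m k y * F (k + unit_index j)))
          - (\<Sum>i\<in>UNIV. v $ i) * (bernstein_basis m k y * F k))"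
    unfolding bernstein_def fwd_diff_def
    by (rule sum.cong) (simp_all add: sum_distrib_left sum_distrib_right sum_subtractf algebra_simps)
  also have "\<dots> = (\<Sum>j\<in>UNIV. v $ j * (\<Sum>k\<in>multi_indices m. bernstein_basis m k y * F (k + unit_index j)))
       - (\<Sum>i\<in>UNIV. v $ i) * bernstein m F y"
    by (simp add: bernstein_def sum_subtractf sum_distrib_left sum.swap[of _ "multi_indices m" UNIV])
  finally show ?thesis .
qed

lemma bernstein_has_real_derivative_line:
  fixes x v :: "real ^ 'n::finite" and F :: "('n \<Rightarrow> nat) \<Rightarrow> real"
  shows "((\<lambda>t. bernstein n F (x + t *\<^sub>R v)) has_real_derivative
           real n * bernstein (n - 1) (fwd_diff v F) (x + t *\<^sub>R v)) (at t)"
proof (cases n)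
  case 0
  then show ?thesis
    by (simp add: bernstein_0)
next
  case (Suc m)
  let ?y = "x + t *\<^sub>R v" and ?V = "\<Sum>i\<in>UNIV. v $ i"
  let ?dmon = "\<lambda>h. \<Sum>j\<in>UNIV. v $ j * real (h j) * monomial_vec (h(j := h j - 1)) ?y"
  let ?D = "\<lambda>h. multinomial_coeff (Suc m) h * (?dmon h * slack ?y ^ (Suc m - multi_size h)
      + monomial_vec h ?y * (real (Suc m - multi_size h) * (- ?V * slack ?y ^ (Suc m - multi_size h - 1))))
      * F h"
  have "((\<lambda>t. bernstein_basis (Suc m) h (x + t *\<^sub>R v) * F h) has_real_derivative ?D h) (at t)" for h
    unfolding bernstein_basis_def
    by (rule DERIV_cong, (rule DERIV_mult DERIV_const DERIV_cmult DERIV_power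
        monomial_vec_has_real_derivative_line slack_has_real_derivative_line)+) (simp add: algebra_simps)
  then have "((\<lambda>t. bernstein n F (x + t *\<^sub>R v)) has_real_derivative (\<Sum>h\<in>multi_indices (Suc m). ?D h)) (at t)"
    unfolding bernstein_def Suc by (rule DERIV_sum)
  moreover have "(\<Sum>h\<in>multi_indices (Suc m). ?D h)
      = (\<Sum>j\<in>UNIV. v $ j * (\<Sum>h\<in>multi_indices (Suc m). multinomial_coeff (Suc m) h * real (h j)
            * monomial_vec (h(j := h j - 1)) ?y * slack ?y ^ (Suc m - multi_size h) * F h))
        - ?V * (\<Sum>h\<in>multi_indices (Suc m). multinomial_coeff (Suc m) h * real (Suc m - multi_size h)
            * monomial_vec h ?y * slack ?y ^ (Suc m - multi_size h - 1) * F h)"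
    by (simp add: sum_distrib_left sum_distrib_right sum_subtractf algebra_simps
        sum.swap[of _ "multi_indices (Suc m)" UNIV])
  ultimately show ?thesis
    unfolding sum_bernstein_basis_decr sum_bernstein_basis_slack bernstein_fwd_diff Suc
    by (simp add: sum_distrib_left right_diff_distrib mult_ac)
qed

lemma std_simplex_eq_halfspaces:
  "(std_simplex :: (real ^ 'n::finite) set)
     = (\<Inter>i. {x. axis i 1 \<bullet> x \<ge> 0}) \<inter> {x. (\<chi> i. 1) \<bullet> x \<le> 1}"
proof -
  have "(\<chi> i. 1) \<bullet> x = (\<Sum>i\<in>UNIV. x $ i)" for x :: "real ^ 'n"
    by (simp add: inner_vec_def)
  then show ?thesis
    by (auto simp: std_simplex_def inner_axis')
qed

lemma convex_std_simplex: "convex (std_simplex :: (real ^ 'n::finite) set)"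
  unfolding std_simplex_eq_halfspaces
  by (intro convex_Int convex_INT convex_halfspace_ge convex_halfspace_le)

lemma compact_std_simplex: "compact (std_simplex :: (real ^ 'n::finite) set)"
  unfolding compact_eq_bounded_closed
proof
  show "closed (std_simplex :: (real ^ 'n) set)"
    unfolding std_simplex_eq_halfspaces
    by (intro closed_Int closed_INT ballI closed_halfspace_ge closed_halfspace_le)
  show "bounded (std_simplex :: (real ^ 'n) set)"
    unfolding bounded_iff
  proof (intro exI ballI)
    fix x :: "real ^ 'n" assume x: "x \<in> std_simplex"
    have "norm x \<le> (\<Sum>i\<in>UNIV. \<bar>x $ i\<bar>)"
      by (rule norm_le_l1_cart)
    also have "\<dots> \<le> 1"
      using x by (simp add: std_simplex_def)
    finally show "norm x \<le> 1" .
  qed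
qed

lemma bernstein_nonneg:
  assumes "y \<in> std_simplex" and "\<And>k. k \<in> multi_indices n \<Longrightarrow> 0 \<le> G k"
  shows "0 \<le> bernstein n G y"
  unfolding bernstein_def bernstein_basis_def multinomial_coeff_def monomial_vec_def slack_def
  using assms by (intro sum_nonneg mult_nonneg_nonneg divide_nonneg_nonneg prod_nonneg)
    (auto simp: std_simplex_def)

lemma convex_on_closed_segmentI:
  fixes f :: "'a::real_vector \<Rightarrow> real"
  assumes "convex_on {0..1} (\<lambda>t. f (x + t *\<^sub>R (y - x)))"
  shows "convex_on (closed_segment x y) f"
proof (rule convex_onI)
  fix t :: real and p q assume t: "0 < t" "t < 1"
    and "p \<in> closed_segment x y" "q \<in> closed_segment x y"
  then obtain r s where r: "r \<in> {0..1}" "p = x + r *\<^sub>R (y - x)" and s: "s \<in> {0..1}" "q = x + s *\<^sub>R (y - x)"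
    unfolding in_segment by (auto simp: algebra_simps)
  have "(1 - t) *\<^sub>R p + t *\<^sub>R q = x + ((1 - t) * r + t * s) *\<^sub>R (y - x)"
    by (simp add: r s algebra_simps)
  then show "f ((1 - t) *\<^sub>R p + t *\<^sub>R q) \<le> (1 - t) * f p + t * f q"
    using convex_onD[OF assms, of t r s] t r s by simp
qed (rule convex_closed_segment)

lemma bernstein_convex_on_closed_segment:
  fixes F :: "('n::finite \<Rightarrow> nat) \<Rightarrow> real"
  assumes x: "x \<in> std_simplex" and y: "y \<in> std_simplex"
    and nonneg: "\<And>k. multi_size k + 2 \<le> n \<Longrightarrow> 0 \<le> fwd_diff (y - x) (fwd_diff (y - x) F) k"
  shows "convex_on (closed_segment x y) (bernstein n F)"
proof (rule convex_on_closed_segmentI)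
  let ?v = "y - x"
  define \<psi> where "\<psi> t = real n * bernstein (n - 1) (fwd_diff ?v F) (x + t *\<^sub>R ?v)" for t
  define \<psi>' where "\<psi>' t = real n * (real (n - 1) * bernstein (n - 2) (fwd_diff ?v (fwd_diff ?v F)) (x + t *\<^sub>R ?v))" for t
  have \<psi>': "(\<psi> has_real_derivative \<psi>' t) (at t)" for t
  proof -
    have "n - 2 = n - 1 - 1"
      by simp
    then show ?thesis
      unfolding \<psi>_def \<psi>'_def by (metis DERIV_cmult bernstein_has_real_derivative_line)
  qed
  have "0 \<le> \<psi>' t" if "t \<in> {0..1}" for t
  proof (cases "2 \<le> n")
    case True
    have "x + t *\<^sub>R ?v \<in> closed_segment x y"
      using that by (auto simp: in_segment algebra_simps)
    then have "x + t *\<^sub>R ?v \<in> std_simplex"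
      using closed_segment_subset[OF x y convex_std_simplex] by blast
    then show ?thesis
      unfolding \<psi>'_def using True nonneg
      by (intro mult_nonneg_nonneg bernstein_nonneg) (auto simp: mem_multi_indices_iff)
  qed (auto simp: \<psi>'_def) \<comment> \<open>for n < 2 the factor n (n - 1) vanishes\<close>
  then have "\<psi> s \<le> \<psi> t" if "s \<in> {0..1}" "t \<in> {0..1}" "s \<le> t" for s t
    using that by (intro deriv_nonneg_imp_mono[OF \<psi>']) auto
  moreover have "((\<lambda>t. bernstein n F (x + t *\<^sub>R ?v)) has_real_derivative \<psi> t) (at t)" for t
    unfolding \<psi>_def by (rule bernstein_has_real_derivative_line)
  ultimately show "convex_on {0..1} (\<lambda>t. bernstein n F (x + t *\<^sub>R ?v))"
    by (intro convex_on_realI[where f' = \<psi>]) auto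
qed

lemma fwd_diff_scaleR: "fwd_diff (c *\<^sub>R v) G = (\<lambda>k. c * fwd_diff v G k)"
  by (simp add: fun_eq_iff fwd_diff_def sum_distrib_left mult.assoc)

lemma fwd_diff_cmult: "fwd_diff v (\<lambda>h. c * G h) k = c * fwd_diff v G k"
  by (simp add: fwd_diff_def sum_distrib_left algebra_simps)

lemma fwd_diff_diff: "fwd_diff (u - w) G k = fwd_diff u G k - fwd_diff w G k"
  by (simp add: fwd_diff_def left_diff_distrib sum_subtractf)

lemma simplex_vertex_index:
  assumes "u \<in> simplex_vertices"
  obtains p where "u = index_vec p" "multi_size p \<le> 1" "\<And>G k. fwd_diff u G k = G (k + p) - G k"
proof -
  from assms consider "u = 0" | i where "u = axis i 1"
    unfolding simplex_vertices_def by blast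
  then show ?thesis
  proof cases
    case 1
    then show ?thesis
      by (intro that[of 0]) (simp_all add: index_vec_def multi_size_def fwd_diff_def vec_eq_iff)
  next
    case 2
    have "fwd_diff u G k = G (k + unit_index i) - G k" for G k
      by (simp add: 2 fwd_diff_def axis_def of_bool_def[symmetric])
    moreover have "u = index_vec (unit_index i)"
      by (simp add: 2 index_vec_def axis_def vec_eq_iff)
    ultimately show ?thesis
      by (intro that) (simp_all add: multi_size_unit_index)
  qed
qed

lemma second_fwd_diff_vertices:
  assumes "\<And>G k. fwd_diff u G k = G (k + p) - G k" and "\<And>G k. fwd_diff w G k = G (k + q) - G k"
  shows "fwd_diff (u - w) (fwd_diff (u - w) G) k = G (k + p + p) + G (k + q + q) - 2 * G (k + p + q)"
  by (simp add: fwd_diff_diff assms add_ac)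

lemma axially_convex_bernstein:
  fixes F :: "('n::finite \<Rightarrow> nat) \<Rightarrow> real"
  assumes "\<And>u w k. u \<in> simplex_vertices \<Longrightarrow> w \<in> simplex_vertices \<Longrightarrow> multi_size k + 2 \<le> n
      \<Longrightarrow> 0 \<le> fwd_diff (u - w) (fwd_diff (u - w) F) k"
  shows "axially_convex (bernstein n F)"
  unfolding axially_convex_def
proof (intro ballI impI)
  fix x y :: "real ^ 'n"
  assume x: "x \<in> std_simplex" and y: "y \<in> std_simplex"
    and "\<exists>u\<in>simplex_vertices. \<exists>w\<in>simplex_vertices. \<exists>c. y - x = c *\<^sub>R (u - w)"
  then obtain u w c where "u \<in> simplex_vertices" "w \<in> simplex_vertices" and d: "y - x = c *\<^sub>R (u - w)"
    by blast
  with assms have "0 \<le> c * (c * fwd_diff (u - w) (fwd_diff (u - w) F) k)" if "multi_size k + 2 \<le> n" for k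
    using that by (metis mult.assoc mult_nonneg_nonneg zero_le_square)
  then show "convex_on (closed_segment x y) (bernstein n F)"
    by (intro bernstein_convex_on_closed_segment[OF x y]) (simp add: d fwd_diff_scaleR fwd_diff_cmult)
qed

lemma continuous_on_bernstein: "continuous_on S (bernstein n F)"
  unfolding bernstein_def bernstein_basis_def monomial_vec_def slack_def
  by (intro continuous_intros)

definition sample_point :: "real \<Rightarrow> nat \<Rightarrow> ('n::finite \<Rightarrow> nat) \<Rightarrow> real ^ 'n \<Rightarrow> real ^ 'n" where
  "sample_point a n h s = (1 / (real n + a)) *\<^sub>R (index_vec h + a *\<^sub>R s)"

lemma C_op_eq_bernstein: "C_op a M n f = bernstein n (\<lambda>h. \<integral>s. f (sample_point a n h s) \<partial>M)"
  by (simp add: fun_eq_iff C_op_def bernstein_def bernstein_basis_def multinomial_coeff_def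
      monomial_vec_def slack_def multi_size_def sample_point_def index_vec_def)

lemma sample_point_in_std_simplex:
  assumes "0 \<le> a" "multi_size h \<le> n" "s \<in> std_simplex"
  shows "sample_point a n h s \<in> std_simplex"
proof (cases "real n + a = 0")
  case True
  then show ?thesis
    by (simp add: sample_point_def std_simplex_def)
next
  case False
  then have pos: "0 < real n + a"
    using assms(1) by simp
  have "(\<Sum>i\<in>UNIV. sample_point a n h s $ i) = (real (multi_size h) + a * (\<Sum>i\<in>UNIV. s $ i)) / (real n + a)"
    by (simp add: sample_point_def index_vec_def multi_size_def sum.distrib sum_distrib_left
        add_divide_distrib sum_divide_distrib)
  also have "\<dots> \<le> 1"
    using assms pos mult_left_mono[of "\<Sum>i\<in>UNIV. s $ i" 1 a] by (simp add: std_simplex_def)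
  finally show ?thesis
    using assms pos by (simp add: std_simplex_def sample_point_def index_vec_def)
qed

lemma integrable_continuous_on_compact:
  fixes g :: "'a::topological_space \<Rightarrow> real"
  assumes "finite_measure M" "sets M = sets (restrict_space borel S)" "compact S" "continuous_on S g"
  shows "integrable M g"
proof -
  interpret finite_measure M by fact
  have "space M = S"
    using sets_eq_imp_space_eq[OF assms(2)] by (simp add: space_restrict_space)
  moreover obtain B where "\<forall>x\<in>S. norm (g x) \<le> B"
    using compact_imp_bounded[OF compact_continuous_image[OF assms(4,3)]] by (auto simp: bounded_iff)
  moreover have "g \<in> borel_measurable M"
    using borel_measurable_continuous_on_restrict[OF assms(4)] measurable_cong_sets[OF assms(2) refl] by blast
  ultimately show ?thesis
    by (intro integrable_const_bound[where B = B]) auto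
qed

lemma midpoint_le_of_axially_convex:
  assumes "axially_convex f" "p \<in> std_simplex" "q \<in> std_simplex"
    and "u \<in> simplex_vertices" "w \<in> simplex_vertices" "q - p = c *\<^sub>R (u - w)"
  shows "2 * f ((1 / 2) *\<^sub>R (p + q)) \<le> f p + f q"
proof -
  have "convex_on (closed_segment p q) f"
    using assms unfolding axially_convex_def by blast
  from convex_onD[OF this, of "1 / 2" p q]
  show ?thesis
    by (simp add: algebra_simps)
qed

lemma second_fwd_diff_sample_integral_nonneg:
  fixes f :: "real ^ 'n::finite \<Rightarrow> real"
  assumes M: "prob_space M" "sets M = sets (restrict_space borel std_simplex)"
    and f: "continuous_on std_simplex f" "axially_convex f"
    and "0 \<le> a" "u \<in> simplex_vertices" "w \<in> simplex_vertices" "multi_size k + 2 \<le> n"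
  shows "0 \<le> fwd_diff (u - w) (fwd_diff (u - w) (\<lambda>h. \<integral>s. f (sample_point a n h s) \<partial>M)) k"
proof -
  interpret prob_space M by fact
  obtain p where p: "u = index_vec p" "multi_size p \<le> 1" "\<And>G k. fwd_diff u G k = G (k + p) - G k"
    using simplex_vertex_index[OF \<open>u \<in> simplex_vertices\<close>] by blast
  obtain q where q: "w = index_vec q" "multi_size q \<le> 1" "\<And>G k. fwd_diff w G k = G (k + q) - G k"
    using simplex_vertex_index[OF \<open>w \<in> simplex_vertices\<close>] by blast
  let ?x = "\<lambda>h s. sample_point a n h s"
  have space: "space M = std_simplex"
    using sets_eq_imp_space_eq[OF M(2)] by (simp add: space_restrict_space)
  have in_simplex: "?x h s \<in> std_simplex" if "multi_size h \<le> n" "s \<in> std_simplex" for h s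
    using sample_point_in_std_simplex[OF \<open>0 \<le> a\<close> that] .
  have integrable: "integrable M (\<lambda>s. f (?x h s))" if "multi_size h \<le> n" for h
  proof (rule integrable_continuous_on_compact[OF finite_measure_axioms M(2) compact_std_simplex])
    have "continuous_on std_simplex (?x h)"
      unfolding sample_point_def by (intro continuous_intros)
    then show "continuous_on std_simplex (\<lambda>s. f (?x h s))"
      using continuous_on_compose2[OF f(1)] in_simplex[OF that] by blast
  qed
  have sizes: "multi_size (k + p + p) \<le> n" "multi_size (k + q + q) \<le> n" "multi_size (k + p + q) \<le> n"
    using p(2) q(2) assms(8) by (simp_all add: multi_size_add)
  have "(\<integral>s. 2 * f (?x (k + p + q) s) \<partial>M) \<le> (\<integral>s. f (?x (k + p + p) s) + f (?x (k + q + q) s) \<partial>M)"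
  proof (intro integral_mono)
    fix s assume "s \<in> space M"
    then have "s \<in> std_simplex"
      by (simp add: space)
    moreover have "?x (k + q + q) s - ?x (k + p + p) s = (- 2 / (real n + a)) *\<^sub>R (u - w)"
      by (simp add: sample_point_def index_vec_def p(1) q(1) vec_eq_iff algebra_simps diff_divide_distrib)
    moreover have "2 *\<^sub>R ?x (k + p + q) s = ?x (k + p + p) s + ?x (k + q + q) s"
      by (simp add: sample_point_def index_vec_def vec_eq_iff algebra_simps add_divide_distrib)
    then have "?x (k + p + q) s = (1 / 2) *\<^sub>R (?x (k + p + p) s + ?x (k + q + q) s)"
      by (metis scaleR_scaleR scaleR_one nonzero_divide_eq_eq zero_neq_numeral)
    ultimately show "2 * f (?x (k + p + q) s) \<le> f (?x (k + p + p) s) + f (?x (k + q + q) s)"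
      using midpoint_le_of_axially_convex[OF f(2) _ _ assms(6,7)] in_simplex sizes by metis
  qed (use integrable sizes in auto)
  then show ?thesis
    using integrable sizes by (simp add: second_fwd_diff_vertices[OF p(3) q(3)])
qed

theorem corollary5p6:
  fixes a :: real and \<mu> :: "nat \<Rightarrow> (real ^ 'n) measure"
    and n :: nat and f :: "real ^ 'n \<Rightarrow> real"
  assumes "0 \<le> a"
    and "\<And>m. m \<ge> 1 \<Longrightarrow> prob_space (\<mu> m)"
    and "\<And>m. m \<ge> 1 \<Longrightarrow> sets (\<mu> m) = sets (restrict_space borel std_simplex)"
    and "n \<ge> 1"
    and "continuous_on std_simplex f"
    and "axially_convex f"
  shows "continuous_on std_simplex (C_op a (\<mu> n) n f) \<and> axially_convex (C_op a (\<mu> n) n f)"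
  unfolding C_op_eq_bernstein
  using second_fwd_diff_sample_integral_nonneg[OF assms(2,3)[OF assms(4)] assms(5,6,1)]
  by (simp add: continuous_on_bernstein axially_convex_bernstein)

end
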